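(* Let $C>0$ be fixed. If \[\frac{\log(n)+\log(\log(n))+\omega_1(n)}{2n}<p<\frac{\log(n)+\log(\log(n))-\omega_2(n)}{n}\] for some sequences $\omega_1(n),\omega_2(n)\to+\infty$, then a.a.s. $\Gamma\in G(n,p)$ has at least $C$ vertices of valence $1$ that are not on isolated edges.
   Context: $G(n,p)$ is the Erdős–Rényi random graph on $n$ vertices with each edge present independently with probability $p=p(n)$; a.a.s. means with probability tending to $1$ as $n\to\infty$; $\log$ is the natural logarithm. An isolated edge is an edge both of whose endpoints have valence $1$. *)

theory Defs
  imports Complex_Main
begin

text \<open>Simple graphs on the vertex set {0..<n}: a graph is a set of edges,
each edge a 2-element subset of {0..<n}.\<close>

definition all_edges :: "nat \<Rightarrow> nat set set" where
  "all_edges n = {e. e \<subseteq> {..<n} \<and> card e = 2}"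

definition valence :: "nat set set \<Rightarrow> nat \<Rightarrow> nat" where
  "valence E v = card {e \<in> E. v \<in> e}"

definition isolated_edge :: "nat set set \<Rightarrow> nat set \<Rightarrow> bool" where
  "isolated_edge E e \<longleftrightarrow> e \<in> E \<and> (\<forall>u\<in>e. valence E u = 1)"

definition leaves_not_isolated :: "nat \<Rightarrow> nat set set \<Rightarrow> nat set" where
  "leaves_not_isolated n E =
     {v \<in> {..<n}. valence E v = 1 \<and> \<not> (\<exists>e. isolated_edge E e \<and> v \<in> e)}"

text \<open>Probability that G(n,p) has property P: each edge of the complete graph
on {0..<n} is present independently with probability p.\<close>
definition Gnp_prob :: "nat \<Rightarrow> real \<Rightarrow> (nat set set \<Rightarrow> bool) \<Rightarrow> real" where
  "Gnp_prob n p P =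
     (\<Sum>E\<in>{E. E \<subseteq> all_edges n \<and> P E}.
        p ^ card E * (1 - p) ^ (card (all_edges n) - card E))"

end

theory Submission
  imports Defs "HOL-Real_Asymp.Real_Asymp"
begin

text \<open>
  Let \<open>X\<close> be the number of vertices of valence 1. Below the upper end of the window the
  expectation \<open>\<mu> = n (n - 1) p (1 - p)^(n-2)\<close> of \<open>X\<close> is at least of order \<open>e^\<omega>\<^sub>2\<close>, and
  pairs of distinct leaves are almost uncorrelated, so \<open>Var X = o(\<mu>\<^sup>2)\<close> and Chebyshev's
  inequality gives \<open>X \<ge> C\<close> a.a.s. Above the lower end of the window the expected number of
  isolated edges, at most \<open>n\<^sup>2 p (1 - p)^(2n-4)\<close>, is \<open>O(\<omega>\<^sub>1 e^-\<omega>\<^sub>1)\<close>, so a.a.s. there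
  are none and every leaf counts.
\<close>

section \<open>Random subsets of a finite set\<close>

text \<open>
  \<open>subset_weight A p E\<close> is the probability that a random subset of \<open>A\<close>, containing each
  element independently with probability \<open>p\<close>, equals \<open>E\<close>.
\<close>

definition subset_weight :: "'a set \<Rightarrow> real \<Rightarrow> 'a set \<Rightarrow> real" where
  "subset_weight A p E = p ^ card E * (1 - p) ^ (card A - card E)"

definition Pr :: "'a set \<Rightarrow> real \<Rightarrow> ('a set \<Rightarrow> bool) \<Rightarrow> real" where
  "Pr A p Q = (\<Sum>E\<in>{E. E \<subseteq> A \<and> Q E}. subset_weight A p E)"

definition expectation :: "'a set \<Rightarrow> real \<Rightarrow> ('a set \<Rightarrow> real) \<Rightarrow> real" where
  "expectation A p X = (\<Sum>E\<in>Pow A. subset_weight A p E * X E)"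

lemma Gnp_prob_eq_Pr: "Gnp_prob n p P = Pr (all_edges n) p P"
  by (simp add: Gnp_prob_def Pr_def subset_weight_def)

lemma subset_weight_nonneg: "0 \<le> p \<Longrightarrow> p \<le> 1 \<Longrightarrow> 0 \<le> subset_weight A p E"
  by (simp add: subset_weight_def)

lemma sum_subset_weight_Pow:
  assumes "finite B"
  shows "(\<Sum>F\<in>Pow B. subset_weight B p F) = 1"
proof -
  have "1 = (\<Prod>x\<in>B. p + (1 - p))" by simp
  also have "\<dots> = (\<Sum>X\<in>Pow B. (\<Prod>x\<in>X. p) * (\<Prod>x\<in>B-X. 1 - p))"
    by (rule prod_add[OF assms])
  also have "\<dots> = (\<Sum>F\<in>Pow B. subset_weight B p F)"
  proof (rule sum.cong[OF refl])
    fix X assume "X \<in> Pow B"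
    then have "card (B - X) = card B - card X"
      using assms by (simp add: card_Diff_subset finite_subset)
    then show "(\<Prod>x\<in>X. p) * (\<Prod>x\<in>B-X. 1 - p) = subset_weight B p X"
      by (simp add: subset_weight_def)
  qed
  finally show ?thesis ..
qed

lemma Pr_Int_eq:
  assumes A: "finite A" and SA: "S \<subseteq> A" and TS: "T \<subseteq> S"
  shows "Pr A p (\<lambda>E. E \<inter> S = T) = subset_weight S p T"
proof -
  have fS: "finite S" using A SA finite_subset by blast
  have fT: "finite T" using fS TS finite_subset by blast
  have fAS: "finite (A - S)" using A by simp
  have events: "{E. E \<subseteq> A \<and> E \<inter> S = T} = (\<lambda>F. T \<union> F) ` Pow (A - S)"
  proof (intro set_eqI iffI)
    fix E assume "E \<in> {E. E \<subseteq> A \<and> E \<inter> S = T}"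
    then have "E \<subseteq> A" "E = T \<union> (E - S)" by auto
    then show "E \<in> (\<lambda>F. T \<union> F) ` Pow (A - S)" by blast
  qed (use TS SA in blast)
  have inj: "inj_on (\<lambda>F. T \<union> F) (Pow (A - S))"
    using TS by (auto simp: inj_on_def)
  have cA: "card A = card S + card (A - S)"
    using A SA by (metis card_Diff_subset card_mono finite_subset le_add_diff_inverse)
  have split: "subset_weight A p (T \<union> F) = subset_weight S p T * subset_weight (A - S) p F"
    if F: "F \<in> Pow (A - S)" for F
  proof -
    have fF: "finite F" using F fAS finite_subset by auto
    have cTF: "card (T \<union> F) = card T + card F"
      using F TS by (intro card_Un_disjoint fT fF) auto
    have "card T \<le> card S" "card F \<le> card (A - S)"
      using card_mono[OF fS TS] F fAS by (auto simp: card_mono)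
    then have "card A - card (T \<union> F) = (card S - card T) + (card (A - S) - card F)"
      using cTF cA by simp
    then show ?thesis
      unfolding subset_weight_def cTF by (simp only: power_add mult_ac)
  qed
  have "Pr A p (\<lambda>E. E \<inter> S = T) = (\<Sum>F\<in>Pow (A - S). subset_weight A p (T \<union> F))"
    unfolding Pr_def events by (simp add: sum.reindex[OF inj])
  also have "\<dots> = subset_weight S p T * (\<Sum>F\<in>Pow (A - S). subset_weight (A - S) p F)"
    by (simp add: split sum_distrib_left)
  also have "\<dots> = subset_weight S p T"
    by (simp add: sum_subset_weight_Pow[OF fAS])
  finally show ?thesis .
qed

lemma Pr_Int_in:
  assumes A: "finite A" and SA: "S \<subseteq> A" and TS: "\<T> \<subseteq> Pow S"
  shows "Pr A p (\<lambda>E. E \<inter> S \<in> \<T>) = (\<Sum>T\<in>\<T>. subset_weight S p T)"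
proof -
  have "finite \<T>"
    using TS A SA by (meson finite_Pow_iff finite_subset)
  moreover have events: "{E. E \<subseteq> A \<and> E \<inter> S \<in> \<T>} = (\<Union>T\<in>\<T>. {E. E \<subseteq> A \<and> E \<inter> S = T})"
    by auto
  ultimately have "Pr A p (\<lambda>E. E \<inter> S \<in> \<T>) = (\<Sum>T\<in>\<T>. Pr A p (\<lambda>E. E \<inter> S = T))"
    unfolding Pr_def events
    by (intro sum.UNION_disjoint) (use A in \<open>auto intro: finite_subset\<close>)
  also have "\<dots> = (\<Sum>T\<in>\<T>. subset_weight S p T)"
    using A SA TS by (intro sum.cong refl Pr_Int_eq) auto
  finally show ?thesis .
qed

lemma Pr_eq_expectation:
  assumes "finite A"
  shows "Pr A p Q = expectation A p (\<lambda>E. of_bool (Q E))"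
proof -
  have events: "{E. E \<subseteq> A \<and> Q E} = {E \<in> Pow A. Q E}" by auto
  have "Pr A p Q = (\<Sum>E\<in>Pow A. if Q E then subset_weight A p E else 0)"
    unfolding Pr_def events by (rule sum.inter_filter) (simp add: assms)
  then show ?thesis
    unfolding expectation_def by (auto intro: sum.cong)
qed

lemma expectation_add:
  "expectation A p (\<lambda>E. X E + Y E) = expectation A p X + expectation A p Y"
  by (simp add: expectation_def distrib_left sum.distrib)

lemma expectation_scale: "expectation A p (\<lambda>E. c * X E) = c * expectation A p X"
  by (simp add: expectation_def sum_distrib_left mult_ac)

lemma expectation_sum:
  "expectation A p (\<lambda>E. \<Sum>i\<in>I. X i E) = (\<Sum>i\<in>I. expectation A p (X i))"
  by (simp add: expectation_def sum_distrib_left sum.swap[of _ I])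

context
  fixes A :: "'a set" and p :: real
  assumes fA: "finite A" and p0: "0 \<le> p" and p1: "p \<le> 1"
begin

lemma expectation_const: "expectation A p (\<lambda>E. c) = c"
  using sum_subset_weight_Pow[OF fA, of p]
  by (simp add: expectation_def sum_distrib_right[symmetric])

lemma expectation_mono:
  "(\<And>E. E \<subseteq> A \<Longrightarrow> X E \<le> Y E) \<Longrightarrow> expectation A p X \<le> expectation A p Y"
  unfolding expectation_def
  by (intro sum_mono mult_left_mono subset_weight_nonneg p0 p1) auto

lemma Pr_True: "Pr A p (\<lambda>E. True) = 1"
  by (simp add: Pr_eq_expectation[OF fA] expectation_const)

lemma Pr_mono: "(\<And>E. E \<subseteq> A \<Longrightarrow> P E \<Longrightarrow> Q E) \<Longrightarrow> Pr A p P \<le> Pr A p Q"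
  unfolding Pr_eq_expectation[OF fA] by (intro expectation_mono) auto

lemma Pr_le_1: "Pr A p P \<le> 1"
  using Pr_mono[of P "\<lambda>_. True"] Pr_True by simp

lemma Pr_not: "Pr A p (\<lambda>E. \<not> P E) = 1 - Pr A p P"
proof -
  have "Pr A p (\<lambda>E. \<not> P E) + Pr A p P = Pr A p (\<lambda>E. True)"
    unfolding Pr_eq_expectation[OF fA] expectation_add[symmetric]
    by (rule arg_cong[where f = "expectation A p"]) (simp add: fun_eq_iff)
  then show ?thesis using Pr_True by simp
qed

lemma Pr_disj_le: "Pr A p (\<lambda>E. P E \<or> Q E) \<le> Pr A p P + Pr A p Q"
  unfolding Pr_eq_expectation[OF fA] expectation_add[symmetric]
  by (intro expectation_mono) auto

lemma Pr_Bex_le: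
  assumes "finite I"
  shows "Pr A p (\<lambda>E. \<exists>i\<in>I. Q i E) \<le> (\<Sum>i\<in>I. Pr A p (Q i))"
proof -
  have "of_bool (\<exists>i\<in>I. Q i E) \<le> (\<Sum>i\<in>I. of_bool (Q i E) :: real)" for E
  proof (cases "\<exists>i\<in>I. Q i E")
    case True
    then obtain i where "i \<in> I" "Q i E" by blast
    then show ?thesis
      using member_le_sum[OF \<open>i \<in> I\<close>, of "\<lambda>i. of_bool (Q i E) :: real"] assms by simp
  qed (simp add: sum_nonneg)
  then show ?thesis
    unfolding Pr_eq_expectation[OF fA] expectation_sum[symmetric]
    by (intro expectation_mono)
qed

lemma Pr_less_le_variance:
  assumes "c < expectation A p X"
  shows "(expectation A p X - c)\<^sup>2 * Pr A p (\<lambda>E. X E < c)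
           \<le> expectation A p (\<lambda>E. (X E)\<^sup>2) - (expectation A p X)\<^sup>2"
proof -
  define m where "m = expectation A p X"
  have "expectation A p (\<lambda>E. (X E - m)\<^sup>2)
          = expectation A p (\<lambda>E. (X E)\<^sup>2 + (- 2 * m) * X E + m\<^sup>2)"
    by (simp add: power2_diff algebra_simps)
  also have "\<dots> = expectation A p (\<lambda>E. (X E)\<^sup>2) - m\<^sup>2"
    by (simp only: expectation_add expectation_scale expectation_const)
      (simp add: m_def power2_eq_square)
  finally have variance: "expectation A p (\<lambda>E. (X E - m)\<^sup>2)
                            = expectation A p (\<lambda>E. (X E)\<^sup>2) - m\<^sup>2" .
  have "(m - c)\<^sup>2 * of_bool (X E < c) \<le> (X E - m)\<^sup>2" for E
  proof (cases "X E < c")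
    case True
    then have "(m - c)\<^sup>2 \<le> (m - X E)\<^sup>2"
      using assms unfolding m_def by (intro power_mono) auto
    then show ?thesis using True by (simp add: power2_commute)
  qed simp
  then have "expectation A p (\<lambda>E. (m - c)\<^sup>2 * of_bool (X E < c))
               \<le> expectation A p (\<lambda>E. (X E - m)\<^sup>2)"
    by (intro expectation_mono)
  then show ?thesis
    unfolding variance Pr_eq_expectation[OF fA] expectation_scale by (simp add: m_def)
qed

end

section \<open>Stars in the complete graph\<close>

definition star :: "nat \<Rightarrow> nat \<Rightarrow> nat set set" where
  "star n v = {e \<in> all_edges n. v \<in> e}"

lemma finite_all_edges: "finite (all_edges n)"
  unfolding all_edges_def by (rule finite_subset[of _ "Pow {..<n}"]) auto

lemma card_all_edges_le: "card (all_edges n) \<le> n\<^sup>2"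
proof -
  have "card (all_edges n) = n choose 2"
    unfolding all_edges_def using n_subsets[of "{..<n}" 2] by simp
  also have "\<dots> \<le> n\<^sup>2"
    by (cases "2 \<le> n") (simp_all add: binomial_le_pow binomial_eq_0)
  finally show ?thesis .
qed

lemma all_edges_iff: "e \<in> all_edges n \<longleftrightarrow> (\<exists>u v. u < n \<and> v < n \<and> u \<noteq> v \<and> e = {u, v})"
  unfolding all_edges_def by (auto simp: card_2_iff)

lemma star_subset_all_edges: "star n v \<subseteq> all_edges n"
  unfolding star_def by auto

lemma finite_star: "finite (star n v)"
  by (rule finite_subset[OF star_subset_all_edges finite_all_edges])

lemma card_star:
  assumes "v < n"
  shows "card (star n v) = n - 1"
proof -
  have "star n v = (\<lambda>w. {v, w}) ` ({..<n} - {v})"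
    using assms unfolding star_def all_edges_def by (auto simp: card_2_iff)
  moreover have "inj_on (\<lambda>w. {v, w}) ({..<n} - {v})"
    by (auto simp: inj_on_def doubleton_eq_iff)
  ultimately show ?thesis
    using assms by (simp add: card_image)
qed

lemma star_Int_star: "u < n \<Longrightarrow> v < n \<Longrightarrow> u \<noteq> v \<Longrightarrow> star n u \<inter> star n v = {{u, v}}"
  unfolding star_def all_edges_def by (auto simp: card_2_iff)

lemma card_star_Un_star:
  assumes "u < n" "v < n" "u \<noteq> v"
  shows "card (star n u \<union> star n v) = 2 * n - 3"
  using card_Un_Int[OF finite_star finite_star, of n u n v]
  by (simp add: star_Int_star card_star assms)

lemma valence_eq_card_Int_star: "E \<subseteq> all_edges n \<Longrightarrow> valence E v = card (E \<inter> star n v)"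
  unfolding valence_def star_def by (rule arg_cong[where f = card]) auto

lemma valence_eq_1_iff:
  "E \<subseteq> all_edges n \<Longrightarrow> valence E v = 1 \<longleftrightarrow> (\<exists>e\<in>star n v. E \<inter> star n v = {e})"
  by (auto simp: valence_eq_card_Int_star card_1_singleton_iff)

section \<open>Probabilities of leaf events\<close>

lemma Pr_valence_eq_1:
  assumes "v < n"
  shows "Pr (all_edges n) p (\<lambda>E. valence E v = 1) = real (n - 1) * p * (1 - p) ^ (n - 2)"
proof -
  let ?S = "star n v"
  have "Pr (all_edges n) p (\<lambda>E. valence E v = 1)
          = Pr (all_edges n) p (\<lambda>E. E \<inter> ?S \<in> (\<lambda>e. {e}) ` ?S)"
    unfolding Pr_def using valence_eq_1_iff[of _ n v]
    by (intro sum.cong refl Collect_cong) (simp add: image_iff, blast)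
  also have "\<dots> = (\<Sum>T\<in>(\<lambda>e. {e}) ` ?S. subset_weight ?S p T)"
    by (rule Pr_Int_in[OF finite_all_edges star_subset_all_edges]) auto
  also have "\<dots> = (\<Sum>e\<in>?S. subset_weight ?S p {e})"
    by (rule sum.reindex_cong[where l = "\<lambda>e. {e}"]) (auto simp: inj_on_def)
  also have "\<dots> = real (n - 1) * p * (1 - p) ^ (n - 2)"
    using card_star[OF assms] by (simp add: subset_weight_def diff_diff_add numeral_2_eq_2)
  finally show ?thesis .
qed

text \<open>
  Two distinct leaves \<open>u\<close>, \<open>v\<close> either share the edge \<open>{u, v}\<close> or use one further edge
  each, so the trace of the graph on the two stars has at most two elements.
\<close>

lemma two_leaves_trace:
  assumes u: "u < n" and v: "v < n" and uv: "u \<noteq> v" and E: "E \<subseteq> all_edges n"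
    and du: "valence E u = 1" and dv: "valence E v = 1"
  shows "E \<inter> (star n u \<union> star n v) \<in>
           insert {{u, v}} ((\<lambda>(e, f). {e, f}) ` ((star n u - {{u, v}}) \<times> (star n v - {{u, v}})))"
proof -
  obtain e where e: "E \<inter> star n u = {e}" using du valence_eq_1_iff[OF E] by metis
  obtain f where f: "E \<inter> star n v = {f}" using dv valence_eq_1_iff[OF E] by metis
  have uv_in: "{u, v} \<in> star n u" "{u, v} \<in> star n v"
    using star_Int_star[OF u v uv] by auto
  have trace: "E \<inter> (star n u \<union> star n v) = {e, f}" using e f by blast
  show ?thesis
  proof (cases "e = {u, v} \<or> f = {u, v}")
    case True
    then have "e = f" using e f uv_in by blast
    then show ?thesis using trace True by auto
  next
    case False
    then have "(e, f) \<in> (star n u - {{u, v}}) \<times> (star n v - {{u, v}})" using e f by blast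
    then show ?thesis unfolding trace by (intro insertI2) (rule rev_image_eqI, auto)
  qed
qed

definition leaf_pair_bound :: "nat \<Rightarrow> real \<Rightarrow> real" where
  "leaf_pair_bound n p =
     p * (1 - p) ^ (2 * n - 4) + real ((n - 2) * (n - 2)) * (p\<^sup>2 * (1 - p) ^ (2 * n - 5))"

lemma Pr_two_leaves_le:
  assumes u: "u < n" and v: "v < n" and uv: "u \<noteq> v" and p0: "0 \<le> p" and p1: "p \<le> 1"
  shows "Pr (all_edges n) p (\<lambda>E. valence E u = 1 \<and> valence E v = 1) \<le> leaf_pair_bound n p"
proof -
  let ?A = "all_edges n" and ?S = "star n u \<union> star n v"
  let ?I = "(star n u - {{u, v}}) \<times> (star n v - {{u, v}})"
  let ?pair = "\<lambda>(e, f). {e, f} :: nat set set"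
  let ?w = "subset_weight ?S p"
  have uv_in: "{u, v} \<in> star n u" "{u, v} \<in> star n v"
    using star_Int_star[OF u v uv] by auto
  have cS: "card ?S = 2 * n - 3" by (rule card_star_Un_star[OF u v uv])
  have fI: "finite ?I" using finite_star by simp
  have "Pr ?A p (\<lambda>E. valence E u = 1 \<and> valence E v = 1)
          \<le> Pr ?A p (\<lambda>E. E \<inter> ?S \<in> insert {{u, v}} (?pair ` ?I))"
    by (rule Pr_mono[OF finite_all_edges p0 p1]) (rule two_leaves_trace[OF u v uv], auto)
  also have "\<dots> = sum ?w (insert {{u, v}} (?pair ` ?I))"
    by (rule Pr_Int_in[OF finite_all_edges]) (use star_subset_all_edges uv_in in auto)
  also have "\<dots> \<le> ?w {{u, v}} + sum ?w (?pair ` ?I)"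
    using fI p0 p1 by (simp add: sum.insert_if subset_weight_nonneg)
  also have "sum ?w (?pair ` ?I) \<le> sum (?w \<circ> ?pair) ?I"
    by (rule sum_image_le[OF fI]) (use p0 p1 in \<open>auto simp: subset_weight_nonneg\<close>)
  also have "sum (?w \<circ> ?pair) ?I = sum (\<lambda>_. p\<^sup>2 * (1 - p) ^ (2 * n - 5)) ?I"
  proof (rule sum.cong[OF refl])
    fix x assume x: "x \<in> ?I"
    then obtain e f where ef: "x = (e, f)" "e \<noteq> f"
      using star_Int_star[OF u v uv] by (cases x) auto
    then show "(?w \<circ> ?pair) x = p\<^sup>2 * (1 - p) ^ (2 * n - 5)"
      using cS by (simp add: subset_weight_def numeral_2_eq_2)
  qed
  also have "\<dots> = real ((n - 2) * (n - 2)) * (p\<^sup>2 * (1 - p) ^ (2 * n - 5))"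
    using card_star[OF u] card_star[OF v] uv_in finite_star
    by (simp add: card_cartesian_product numeral_2_eq_2)
  also have "?w {{u, v}} = p * (1 - p) ^ (2 * n - 4)"
    using cS by (simp add: subset_weight_def)
  finally show ?thesis by (simp add: leaf_pair_bound_def)
qed

lemma Pr_isolated_edge_le:
  assumes e: "e \<in> all_edges n" and p0: "0 \<le> p" and p1: "p \<le> 1"
  shows "Pr (all_edges n) p (\<lambda>E. isolated_edge E e) \<le> p * (1 - p) ^ (2 * n - 4)"
proof -
  obtain u v where uv: "u < n" "v < n" "u \<noteq> v" and e_eq: "e = {u, v}"
    using e all_edges_iff by blast
  let ?S = "star n u \<union> star n v"
  have e_in: "e \<in> star n u" "e \<in> star n v"
    using star_Int_star[OF uv] e_eq by auto
  have "Pr (all_edges n) p (\<lambda>E. isolated_edge E e) \<le> Pr (all_edges n) p (\<lambda>E. E \<inter> ?S = {e})"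
  proof (rule Pr_mono[OF finite_all_edges p0 p1])
    fix E assume E: "E \<subseteq> all_edges n" and iso: "isolated_edge E e"
    then have "e \<in> E" "valence E u = 1" "valence E v = 1"
      using e_eq unfolding isolated_edge_def by auto
    then obtain a b where a: "E \<inter> star n u = {a}" and b: "E \<inter> star n v = {b}"
      using valence_eq_1_iff[OF E] by metis
    moreover have "a = e" "b = e"
      using a b \<open>e \<in> E\<close> e_in by blast+
    ultimately show "E \<inter> ?S = {e}" by blast
  qed
  also have "\<dots> = p * (1 - p) ^ (2 * n - 4)"
    using Pr_Int_eq[OF finite_all_edges, where S = ?S and T = "{e}" and p = p] e_in star_subset_all_edges
      card_star_Un_star[OF uv]
    by (simp add: subset_weight_def)
  finally show ?thesis .
qed

section \<open>The second moment method for the number of leaves\<close>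

definition leaf_count :: "nat \<Rightarrow> nat set set \<Rightarrow> real" where
  "leaf_count n E = real (card {v \<in> {..<n}. valence E v = 1})"

definition expected_leaves :: "nat \<Rightarrow> real \<Rightarrow> real" where
  "expected_leaves n p = real n * real (n - 1) * p * (1 - p) ^ (n - 2)"

definition leaf_count_tail_bound :: "nat \<Rightarrow> real \<Rightarrow> real \<Rightarrow> real" where
  "leaf_count_tail_bound n p C =
     (1 / expected_leaves n p + 1 / (real n * real (n - 1) * p) + p / (1 - p))
       / (1 - C / expected_leaves n p)\<^sup>2"

definition isolated_edge_bound :: "nat \<Rightarrow> real \<Rightarrow> real" where
  "isolated_edge_bound n p = real n ^ 2 * (p * (1 - p) ^ (2 * n - 4))"

lemma leaf_count_eq_sum: "leaf_count n E = (\<Sum>v<n. of_bool (valence E v = 1))"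
  unfolding leaf_count_def by (simp add: sum.If_cases Int_def)

lemma expectation_leaf_count: "expectation (all_edges n) p (leaf_count n) = expected_leaves n p"
proof -
  have "expectation (all_edges n) p (leaf_count n)
          = (\<Sum>v<n. Pr (all_edges n) p (\<lambda>E. valence E v = 1))"
    unfolding leaf_count_eq_sum[abs_def] expectation_sum
    by (simp only: Pr_eq_expectation[OF finite_all_edges])
  also have "\<dots> = (\<Sum>v<n. real (n - 1) * p * (1 - p) ^ (n - 2))"
    by (intro sum.cong refl Pr_valence_eq_1) simp
  finally show ?thesis
    unfolding expected_leaves_def by (simp only: sum_constant card_lessThan mult.assoc)
qed

lemma expectation_leaf_count_sq_le:
  assumes p0: "0 \<le> p" and p1: "p \<le> 1"
  shows "expectation (all_edges n) p (\<lambda>E. (leaf_count n E)\<^sup>2)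
           \<le> expected_leaves n p + real n * real (n - 1) * leaf_pair_bound n p"
proof -
  let ?A = "all_edges n"
  let ?P = "\<lambda>u v. Pr ?A p (\<lambda>E. valence E u = 1 \<and> valence E v = 1)"
  have "expectation ?A p (\<lambda>E. (leaf_count n E)\<^sup>2) = (\<Sum>u<n. \<Sum>v<n. ?P u v)"
    unfolding leaf_count_eq_sum power2_eq_square sum_product expectation_sum
    by (simp only: of_bool_conj Pr_eq_expectation[OF finite_all_edges])
  also have "\<dots> \<le> (\<Sum>u<n. real (n - 1) * p * (1 - p) ^ (n - 2) + real (n - 1) * leaf_pair_bound n p)"
  proof (rule sum_mono)
    fix u assume u: "u \<in> {..<n}"
    have "(\<Sum>v<n. ?P u v) = ?P u u + (\<Sum>v\<in>{..<n} - {u}. ?P u v)"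
      using u by (simp add: sum.remove)
    also have "\<dots> \<le> real (n - 1) * p * (1 - p) ^ (n - 2) + (\<Sum>v\<in>{..<n} - {u}. leaf_pair_bound n p)"
      using u Pr_valence_eq_1[of u n p] by (intro add_mono sum_mono Pr_two_leaves_le p0 p1) auto
    finally show "(\<Sum>v<n. ?P u v)
                    \<le> real (n - 1) * p * (1 - p) ^ (n - 2) + real (n - 1) * leaf_pair_bound n p"
      using u by simp
  qed
  also have "\<dots> = expected_leaves n p + real n * real (n - 1) * leaf_pair_bound n p"
    by (simp only: sum_constant card_lessThan expected_leaves_def distrib_left mult.assoc)
  finally show ?thesis .
qed

text \<open>
  The only non-trivial estimate: pairs of leaves sharing their edge contribute the term
  \<open>1/(n(n-1)p)\<close>, and for disjoint pairs \<open>(n-2)\<^sup>2 \<le> n(n-1)\<close> reduces the covariance to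
  the term \<open>p/(1-p)\<close>.
\<close>

lemma leaf_count_variance_le:
  fixes n :: nat and p :: real
  assumes n3: "n \<ge> 3" and p0: "0 < p" and p1: "p < 1"
  defines "m \<equiv> expected_leaves n p"
  shows "m + real n * real (n - 1) * leaf_pair_bound n p - m\<^sup>2
           \<le> m\<^sup>2 * (1 / m + 1 / (real n * real (n - 1) * p) + p / (1 - p))"
proof -
  define q where "q = 1 - p"
  define Q where "Q = q ^ (2 * n - 5)"
  define N where "N = real n"
  define K where "K = real (n - 1)"
  define D where "D = real ((n - 2) * (n - 2))"
  have q0: "0 < q" using p1 unfolding q_def by simp
  have Q0: "0 < Q" using q0 unfolding Q_def by simp
  have N0: "0 < N" "0 < K" using n3 unfolding N_def K_def by auto
  have "2 * n - 4 = Suc (2 * n - 5)" using n3 by simp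
  then have e1: "q ^ (2 * n - 4) = Q * q" unfolding Q_def by simp
  have e2: "(q ^ (n - 2))\<^sup>2 = Q * q"
    using n3 e1 by (simp add: power_mult[symmetric] algebra_simps diff_mult_distrib)
  have DK: "D \<le> N * K"
    unfolding D_def N_def K_def of_nat_mult[symmetric] of_nat_le_iff by (intro mult_le_mono) auto
  have mdef: "m = N * K * p * q ^ (n - 2)"
    unfolding m_def expected_leaves_def N_def K_def q_def ..
  have m0: "0 < m" using mdef N0 p0 q0 by simp
  have msq: "m\<^sup>2 = (N * K * p)\<^sup>2 * (Q * q)"
    unfolding mdef using e2 by (simp add: power_mult_distrib)
  have sb: "real n * real (n - 1) * leaf_pair_bound n p = N * K * (p * (Q * q) + D * (p\<^sup>2 * Q))"
    unfolding leaf_pair_bound_def N_def K_def D_def using e1 unfolding q_def Q_def by simp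
  have "N * K * (D * (p\<^sup>2 * Q)) - m\<^sup>2 = N * K * p\<^sup>2 * Q * (D - N * K * q)"
    unfolding msq by (simp add: algebra_simps power2_eq_square)
  also have "\<dots> \<le> N * K * p\<^sup>2 * Q * (N * K * p)"
    using DK N0 Q0 unfolding q_def by (intro mult_left_mono) (auto simp: algebra_simps)
  finally have "m + real n * real (n - 1) * leaf_pair_bound n p - m\<^sup>2
                  \<le> m + N * K * p * (Q * q) + N * K * p\<^sup>2 * Q * (N * K * p)"
    unfolding sb by (simp add: algebra_simps)
  also have "\<dots> = m\<^sup>2 * (1 / m + 1 / (N * K * p) + p / q)"
  proof -
    have "m\<^sup>2 * (1 / m + 1 / (N * K * p) + p / q) = m + m\<^sup>2 / (N * K * p) + m\<^sup>2 * p / q"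
      using m0 N0 p0 q0 by (simp add: field_simps power2_eq_square)
    moreover have "m\<^sup>2 / (N * K * p) = N * K * p * (Q * q)"
      unfolding msq using N0 p0 by (simp add: field_simps power2_eq_square)
    moreover have "m\<^sup>2 * p / q = N * K * p\<^sup>2 * Q * (N * K * p)"
      unfolding msq using q0 by (simp add: field_simps power2_eq_square)
    ultimately show ?thesis by simp
  qed
  finally show ?thesis unfolding N_def K_def q_def .
qed

lemma Pr_leaf_count_less_le:
  assumes n3: "n \<ge> 3" and p0: "0 < p" and p1: "p < 1" and Cm: "C < expected_leaves n p"
  shows "Pr (all_edges n) p (\<lambda>E. leaf_count n E < C) \<le> leaf_count_tail_bound n p C"
proof -
  let ?m = "expected_leaves n p"
  let ?r = "1 / ?m + 1 / (real n * real (n - 1) * p) + p / (1 - p)"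
  have m0: "0 < ?m" using Cm n3 p0 p1 by (simp add: expected_leaves_def)
  have "(?m - C)\<^sup>2 * Pr (all_edges n) p (\<lambda>E. leaf_count n E < C)
          \<le> ?m + real n * real (n - 1) * leaf_pair_bound n p - ?m\<^sup>2"
    using Pr_less_le_variance[OF finite_all_edges[of n], where p = p and X = "leaf_count n" and c = C]
      expectation_leaf_count_sq_le[of p n] p0 p1 Cm
    by (simp add: expectation_leaf_count)
  also have "\<dots> \<le> ?m\<^sup>2 * ?r"
    by (rule leaf_count_variance_le[OF n3 p0 p1])
  also have "\<dots> = (?m - C)\<^sup>2 * leaf_count_tail_bound n p C"
  proof -
    have "(?m - C)\<^sup>2 = ?m\<^sup>2 * (1 - C / ?m)\<^sup>2"
      using m0 by (simp add: field_simps power2_eq_square)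
    moreover have "1 - C / ?m \<noteq> 0" using Cm m0 by (simp add: field_simps)
    ultimately show ?thesis using Cm by (simp add: leaf_count_tail_bound_def)
  qed
  finally show ?thesis
    using Cm by (simp add: mult_le_cancel_left_pos[of "(?m - C)\<^sup>2"])
qed

lemma Pr_isolated_edge_ex_le:
  assumes p0: "0 \<le> p" and p1: "p \<le> 1"
  shows "Pr (all_edges n) p (\<lambda>E. \<exists>e\<in>all_edges n. isolated_edge E e) \<le> isolated_edge_bound n p"
proof -
  let ?A = "all_edges n"
  have "Pr ?A p (\<lambda>E. \<exists>e\<in>?A. isolated_edge E e) \<le> (\<Sum>e\<in>?A. Pr ?A p (\<lambda>E. isolated_edge E e))"
    by (rule Pr_Bex_le[OF finite_all_edges p0 p1 finite_all_edges])
  also have "\<dots> \<le> (\<Sum>e\<in>?A. p * (1 - p) ^ (2 * n - 4))"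
    by (intro sum_mono Pr_isolated_edge_le p0 p1)
  also have "\<dots> = real (card ?A) * (p * (1 - p) ^ (2 * n - 4))"
    by simp
  also have "\<dots> \<le> isolated_edge_bound n p"
    unfolding isolated_edge_bound_def using card_all_edges_le[of n] p0 p1
    by (intro mult_right_mono) (auto simp flip: of_nat_power)
  finally show ?thesis .
qed

lemma leaves_not_isolated_eq:
  assumes "E \<subseteq> all_edges n" and "\<not> (\<exists>e\<in>all_edges n. isolated_edge E e)"
  shows "leaves_not_isolated n E = {v \<in> {..<n}. valence E v = 1}"
  using assms unfolding leaves_not_isolated_def isolated_edge_def by blast

lemma Gnp_leaves_not_isolated_ge:
  assumes n3: "n \<ge> 3" and p0: "0 < p" and p1: "p < 1" and Cm: "C < expected_leaves n p"
  shows "1 - leaf_count_tail_bound n p C - isolated_edge_bound n p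
           \<le> Gnp_prob n p (\<lambda>E. real (card (leaves_not_isolated n E)) \<ge> C)"
proof -
  let ?A = "all_edges n"
  let ?bad = "\<lambda>E. leaf_count n E < C \<or> (\<exists>e\<in>?A. isolated_edge E e)"
  have "1 - leaf_count_tail_bound n p C - isolated_edge_bound n p \<le> 1 - Pr ?A p ?bad"
    using Pr_disj_le[OF finite_all_edges[of n] less_imp_le[OF p0] less_imp_le[OF p1],
        where P = "\<lambda>E. leaf_count n E < C" and Q = "\<lambda>E. \<exists>e\<in>?A. isolated_edge E e"]
      Pr_leaf_count_less_le[OF assms] Pr_isolated_edge_ex_le[of p n] p0 p1
    by linarith
  also have "\<dots> = Pr ?A p (\<lambda>E. \<not> ?bad E)"
    by (rule Pr_not[OF finite_all_edges less_imp_le[OF p0] less_imp_le[OF p1], symmetric])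
  also have "\<dots> \<le> Gnp_prob n p (\<lambda>E. real (card (leaves_not_isolated n E)) \<ge> C)"
    unfolding Gnp_prob_eq_Pr using p0 p1
    by (intro Pr_mono[OF finite_all_edges]) (auto simp: leaves_not_isolated_eq leaf_count_def)
  finally show ?thesis .
qed

section \<open>Estimates in the window\<close>

lemma mult_exp_neg_antimono:
  fixes x y :: real
  assumes "1 \<le> x" "x \<le> y"
  shows "y * exp (- y) \<le> x * exp (- x)"
proof -
  have "y / x = 1 + (y - x) / x" using assms by (simp add: field_simps)
  also have "\<dots> \<le> 1 + (y - x)" using divide_left_mono[of 1 x "y - x"] assms by simp
  also have "\<dots> \<le> exp (y - x)" by (rule exp_ge_add_one_self)
  finally have "y \<le> x * exp (y - x)" using assms by (simp add: divide_le_eq mult.commute)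
  then have "y * exp (- y) \<le> x * exp (y - x) * exp (- y)" by (rule mult_right_mono) simp
  also have "\<dots> = x * exp (- x)" by (simp add: mult.assoc exp_add[symmetric])
  finally show ?thesis .
qed

lemma exp_neg_ln_plus_ln_ln:
  fixes x c :: real
  assumes "1 < x"
  shows "exp (- (ln x + ln (ln x) + c)) = exp (- c) / (x * ln x)"
proof -
  have "exp (- c) = exp (- (ln x + ln (ln x) + c)) * exp (ln x) * exp (ln (ln x))"
    by (simp flip: exp_add)
  moreover have "0 < ln x" using assms by simp
  ultimately show ?thesis using assms by (simp add: field_simps)
qed

lemma ln_ge_2: "16 \<le> n \<Longrightarrow> 2 \<le> ln (real n)"
proof -
  assume "16 \<le> n"
  have "exp (2::real) = exp 1 ^ 2" using exp_of_nat_mult[of 2 1] by simp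
  also have "\<dots> \<le> 3 ^ 2" by (rule power_mono[OF exp_le]) simp
  also have "\<dots> \<le> real n" using \<open>16 \<le> n\<close> by simp
  finally show ?thesis using \<open>16 \<le> n\<close> by (subst ln_ge_iff) auto
qed

lemma exp_le_one_minus_power:
  fixes p :: real
  assumes "0 \<le> p" "p \<le> 1/2"
  shows "exp (- (real n * p) - 2 * (real n * p\<^sup>2)) \<le> (1 - p) ^ n"
proof -
  have "- p - 2 * p\<^sup>2 \<le> ln (1 - p)" by (rule ln_one_minus_pos_lower_bound) (use assms in auto)
  then have "exp (real n * (- p - 2 * p\<^sup>2)) \<le> exp (real n * ln (1 - p))"
    by (simp add: mult_left_mono)
  also have "\<dots> = (1 - p) ^ n" using assms by (simp add: exp_of_nat_mult)
  finally show ?thesis by (simp add: algebra_simps)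
qed

lemma one_minus_power_le_exp:
  fixes p :: real
  assumes "0 \<le> p" "p \<le> 1"
  shows "(1 - p) ^ k \<le> exp (- (real k * p))"
proof -
  have "(1 - p) ^ k \<le> exp (- p) ^ k"
    by (rule power_mono) (use exp_ge_add_one_self[of "- p"] assms in auto)
  then show ?thesis by (simp add: exp_of_nat_mult[symmetric])
qed

text \<open>
  Both bounds compare \<open>x e^-x\<close> at \<open>x = np\<close> resp. \<open>x = 2np\<close> with its value at
  \<open>ln n + ln ln n \<mp> \<omega>\<close>, which is \<open>(ln n + ln ln n \<mp> \<omega>) e^\<plusminus>\<omega> / (n ln n)\<close>.
\<close>

lemma expected_leaves_ge:
  fixes n :: nat and p w :: real
  defines "l \<equiv> ln (real n)"
  assumes n: "16 \<le> n"
    and up: "p < (l + ln l - w) / real n" and lo: "l / 2 < real n * p"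
    and p2: "p \<le> 1/2" and np2: "2 * (real n * p\<^sup>2) \<le> 1"
  shows "exp w / (4 * exp 1) \<le> expected_leaves n p"
proof -
  have l2: "2 \<le> l" unfolding l_def by (rule ln_ge_2[OF n])
  have n0: "0 < real n" using n by simp
  define x where "x = real n * p"
  define y where "y = l + ln l - w"
  have x1: "1 \<le> x" using lo l2 unfolding x_def by simp
  have xy: "x \<le> y" using up n0 unfolding x_def y_def by (simp add: field_simps)
  have "0 \<le> real n * p" using x1 unfolding x_def by linarith
  then have p0: "0 \<le> p" using n0 by (simp add: zero_le_mult_iff)
  have "exp w / (2 * real n) = (l / 2) * (exp w / (real n * l))"
    using l2 n0 by (simp add: field_simps)
  also have "\<dots> \<le> y * (exp w / (real n * l))"
    using lo xy l2 n0 unfolding x_def by (intro mult_right_mono) auto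
  also have "\<dots> = y * exp (- y)"
    using exp_neg_ln_plus_ln_ln[of "real n" "- w"] n unfolding y_def l_def by simp
  also have "\<dots> \<le> x * exp (- x)" by (rule mult_exp_neg_antimono[OF x1 xy])
  finally have xe: "exp w / (2 * real n) \<le> x * exp (- x)" .
  have "exp (- x) * exp (- 1) \<le> exp (- (real n * p) - 2 * (real n * p\<^sup>2))"
    using np2 unfolding x_def by (simp flip: exp_add)
  also have "\<dots> \<le> (1 - p) ^ n" by (rule exp_le_one_minus_power[OF p0 p2])
  also have "\<dots> \<le> (1 - p) ^ (n - 2)" by (rule power_decreasing) (use p0 p2 in auto)
  finally have q: "exp (- x) * exp (- 1) \<le> (1 - p) ^ (n - 2)" .
  have half: "1/2 \<le> real (n - 1) / real n" using n by (simp add: field_simps of_nat_diff)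
  have "exp w / (4 * exp 1) = (1/2) * (exp w / (2 * real n) * exp (- 1)) * real n"
    using n0 by (simp add: exp_minus field_simps)
  also have "\<dots> \<le> (real (n - 1) / real n) * (x * exp (- x) * exp (- 1)) * real n"
    using half xe x1 n0 by (intro mult_right_mono mult_mono) auto
  also have "\<dots> \<le> (real (n - 1) / real n) * (x * (1 - p) ^ (n - 2)) * real n"
    using q x1 n0 by (intro mult_right_mono mult_left_mono) (auto simp: mult.assoc)
  also have "\<dots> = expected_leaves n p"
    using n0 unfolding x_def expected_leaves_def by (simp add: field_simps)
  finally show ?thesis .
qed

lemma isolated_edge_bound_le:
  fixes n :: nat and p w :: real
  defines "l \<equiv> ln (real n)"
  assumes n: "16 \<le> n" and w: "0 \<le> w"
    and lo: "l + ln l + w < 2 * (real n * p)"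
    and p0: "0 \<le> p" and p4: "p \<le> 1/4"
  shows "isolated_edge_bound n p \<le> exp 1 * exp (- w) + exp 1 / 2 * (w * exp (- w))"
proof -
  have l2: "2 \<le> l" unfolding l_def by (rule ln_ge_2[OF n])
  have n0: "0 < real n" using n by simp
  have lnl: "0 \<le> ln l" "ln l \<le> l" using l2 ln_less_self[of l] by (auto, linarith)
  define y where "y = 2 * (real n * p)"
  define z where "z = l + ln l + w"
  have z1: "1 \<le> z" using l2 lnl w unfolding z_def by linarith
  have zy: "z \<le> y" using lo unfolding y_def z_def by simp
  have "(1 - p) ^ (2 * n - 4) \<le> exp (- (real (2 * n - 4) * p))"
    by (rule one_minus_power_le_exp) (use p0 p4 in auto)
  also have "\<dots> = exp (- y) * exp (4 * p)"
    using n unfolding y_def by (simp add: of_nat_diff exp_add[symmetric] algebra_simps)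
  also have "\<dots> \<le> exp (- y) * exp 1" using p4 by simp
  finally have q: "(1 - p) ^ (2 * n - 4) \<le> exp (- y) * exp 1" .
  have "isolated_edge_bound n p \<le> real n ^ 2 * (p * (exp (- y) * exp 1))"
    unfolding isolated_edge_bound_def using q p0 by (intro mult_left_mono) auto
  also have "\<dots> = exp 1 * (real n / 2) * (y * exp (- y))"
    unfolding y_def by (simp add: power2_eq_square)
  also have "\<dots> \<le> exp 1 * (real n / 2) * (z * exp (- z))"
    using n0 by (intro mult_left_mono mult_exp_neg_antimono[OF z1 zy]) auto
  also have "\<dots> = exp 1 * (real n / 2) * (z * (exp (- w) / (real n * l)))"
    using n by (simp only: z_def l_def exp_neg_ln_plus_ln_ln[of "real n"] of_nat_1 of_nat_less_iff)
  also have "\<dots> = exp 1 * (z * exp (- w)) / (2 * l)"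
    using n0 l2 by (simp add: field_simps)
  also have "\<dots> \<le> exp 1 * ((2 * l + w) * exp (- w)) / (2 * l)"
    using lnl l2 unfolding z_def by (intro divide_right_mono mult_left_mono mult_right_mono) auto
  also have "\<dots> = exp 1 * exp (- w) + exp 1 / 2 * (w * exp (- w) / l)"
    using l2 by (simp add: field_simps)
  also have "\<dots> \<le> exp 1 * exp (- w) + exp 1 / 2 * (w * exp (- w) / 1)"
    using l2 w by (intro add_left_mono mult_left_mono divide_left_mono) auto
  finally show ?thesis by simp
qed

lemma window_bounds:
  fixes n :: nat and p w1 w2 :: real
  defines "l \<equiv> ln (real n)"
  assumes n: "16 \<le> n" and w1: "0 \<le> w1" and w2: "0 \<le> w2"
    and lo: "(l + ln l + w1) / (2 * real n) < p" and up: "p < (l + ln l - w2) / real n"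
    and s1: "2 * l / real n < 1/4" and s2: "8 * l\<^sup>2 / real n < 1"
  shows "0 < p" "p \<le> 2 * l / real n" "p \<le> 1/4" "2 * (real n * p\<^sup>2) \<le> 1"
    "l / 2 < real n * p" "l + ln l + w1 < 2 * (real n * p)"
proof -
  have l2: "2 \<le> l" unfolding l_def by (rule ln_ge_2[OF n])
  have n0: "0 < real n" using n by simp
  have lnl: "0 \<le> ln l" "ln l \<le> l" using l2 ln_less_self[of l] by (auto, linarith)
  show lo2: "l + ln l + w1 < 2 * (real n * p)" using lo n0 by (simp add: field_simps)
  then show "l / 2 < real n * p" using lnl w1 by linarith
  have "0 < (l + ln l + w1) / (2 * real n)" by (rule divide_pos_pos) (use l2 lnl w1 n0 in linarith)+
  then show p0: "0 < p" using lo by linarith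
  have "(l + ln l - w2) / real n \<le> 2 * l / real n"
    using lnl w2 n0 by (intro divide_right_mono) auto
  then show pu: "p \<le> 2 * l / real n" using up by linarith
  then show "p \<le> 1/4" using s1 by linarith
  have "2 * (real n * p\<^sup>2) \<le> 2 * (real n * (2 * l / real n)\<^sup>2)"
    using pu p0 n0 by (intro mult_left_mono power_mono) auto
  also have "\<dots> = 8 * l\<^sup>2 / real n" using n0 by (simp add: power2_eq_square field_simps)
  finally show "2 * (real n * p\<^sup>2) \<le> 1" using s2 by linarith
qed

section \<open>Asymptotics\<close>

context
  fixes p \<omega>1 \<omega>2 :: "nat \<Rightarrow> real"
  assumes \<omega>1: "filterlim \<omega>1 at_top sequentially"
    and \<omega>2: "filterlim \<omega>2 at_top sequentially"
    and window: "eventually (\<lambda>n. (ln n + ln (ln n) + \<omega>1 n) / (2 * n) < p n \<and>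
                                 p n < (ln n + ln (ln n) - \<omega>2 n) / n) sequentially"
begin

lemma eventually_window_bounds:
  "eventually (\<lambda>n. 16 \<le> n \<and> 0 \<le> \<omega>1 n \<and>
      0 < p n \<and> p n \<le> 2 * ln (real n) / real n \<and> p n \<le> 1/4 \<and> 2 * (real n * (p n)\<^sup>2) \<le> 1 \<and>
      ln (real n) / 2 < real n * p n \<and> ln (real n) + ln (ln (real n)) + \<omega>1 n < 2 * (real n * p n) \<and>
      p n < (ln (real n) + ln (ln (real n)) - \<omega>2 n) / real n) sequentially"
proof -
  have "(\<lambda>n. 2 * ln (real n) / real n) \<longlonglongrightarrow> 0" by real_asymp
  from order_tendstoD(2)[OF this, of "1/4"]
  have "eventually (\<lambda>n. 2 * ln (real n) / real n < 1/4) sequentially" by simp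
  moreover have "(\<lambda>n. 8 * (ln (real n))\<^sup>2 / real n) \<longlonglongrightarrow> 0" by real_asymp
  from order_tendstoD(2)[OF this, of 1]
  have "eventually (\<lambda>n. 8 * (ln (real n))\<^sup>2 / real n < 1) sequentially" by simp
  moreover have "eventually (\<lambda>n. 0 \<le> \<omega>1 n) sequentially" "eventually (\<lambda>n. 0 \<le> \<omega>2 n) sequentially"
    using \<omega>1 \<omega>2 unfolding filterlim_at_top by blast+
  ultimately show ?thesis
    using eventually_ge_at_top[of 16] window
    by eventually_elim (use window_bounds in auto)
qed

lemma p_tendsto_0: "p \<longlonglongrightarrow> 0"
proof (rule tendsto_sandwich[OF _ _ tendsto_const])
  show "eventually (\<lambda>n. 0 \<le> p n) sequentially"
    "eventually (\<lambda>n. p n \<le> 2 * ln (real n) / real n) sequentially"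
    using eventually_window_bounds by (auto elim: eventually_mono)
  show "(\<lambda>n. 2 * ln (real n) / real n) \<longlonglongrightarrow> 0" by real_asymp
qed

lemma expected_leaves_at_top: "filterlim (\<lambda>n. expected_leaves n (p n)) at_top sequentially"
proof (rule filterlim_at_top_mono)
  show "filterlim (\<lambda>n. 1 / (4 * exp 1) * exp (\<omega>2 n)) at_top sequentially"
    by (intro filterlim_tendsto_pos_mult_at_top[OF tendsto_const]
        filterlim_compose[OF exp_at_top \<omega>2]) simp
  show "eventually (\<lambda>n. 1 / (4 * exp 1) * exp (\<omega>2 n) \<le> expected_leaves n (p n)) sequentially"
    using eventually_window_bounds
    by eventually_elim (simp, intro expected_leaves_ge, auto)
qed

lemma leaf_count_tail_bound_tendsto_0: "(\<lambda>n. leaf_count_tail_bound n (p n) C) \<longlonglongrightarrow> 0"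
proof -
  have "filterlim (\<lambda>n. real n * real (n - 1) * p n) at_top sequentially"
  proof (rule filterlim_at_top_mono)
    show "filterlim (\<lambda>n. real n - 1) at_top sequentially" by real_asymp
    show "eventually (\<lambda>n. real n - 1 \<le> real n * real (n - 1) * p n) sequentially"
      using eventually_window_bounds
    proof eventually_elim
      case (elim n)
      then have "1 \<le> real n * p n" using ln_ge_2[of n] by linarith
      then have "real (n - 1) \<le> real (n - 1) * (real n * p n)" by (simp add: mult_le_cancel_left1)
      then show ?case by (simp add: algebra_simps)
    qed
  qed
  then have "(\<lambda>n. 1 / (real n * real (n - 1) * p n)) \<longlonglongrightarrow> 0"
    by (intro tendsto_divide_0[OF tendsto_const] filterlim_at_top_imp_at_infinity)
  moreover have "(\<lambda>n. c / expected_leaves n (p n)) \<longlonglongrightarrow> 0" for c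
    by (intro tendsto_divide_0[OF tendsto_const] filterlim_at_top_imp_at_infinity
        expected_leaves_at_top)
  moreover have "(\<lambda>n. p n / (1 - p n)) \<longlonglongrightarrow> 0 / (1 - 0)"
    by (intro tendsto_intros p_tendsto_0) simp
  moreover note p_tendsto_0
  ultimately have "(\<lambda>n. leaf_count_tail_bound n (p n) C) \<longlonglongrightarrow> (0 + 0 + 0 / (1 - 0)) / (1 - 0)\<^sup>2"
    unfolding leaf_count_tail_bound_def by (intro tendsto_intros) auto
  then show ?thesis by simp
qed

lemma isolated_edge_bound_tendsto_0: "(\<lambda>n. isolated_edge_bound n (p n)) \<longlonglongrightarrow> 0"
proof (rule tendsto_sandwich[OF _ _ tendsto_const])
  show "eventually (\<lambda>n. 0 \<le> isolated_edge_bound n (p n)) sequentially"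
    using eventually_window_bounds by eventually_elim (simp add: isolated_edge_bound_def)
  have "((\<lambda>x::real. exp 1 * exp (- x) + exp 1 / 2 * (x * exp (- x))) \<longlongrightarrow> 0) at_top"
    by real_asymp
  then show "(\<lambda>n. exp 1 * exp (- \<omega>1 n) + exp 1 / 2 * (\<omega>1 n * exp (- \<omega>1 n))) \<longlonglongrightarrow> 0"
    by (rule filterlim_compose[OF _ \<omega>1])
  show "eventually (\<lambda>n. isolated_edge_bound n (p n)
          \<le> exp 1 * exp (- \<omega>1 n) + exp 1 / 2 * (\<omega>1 n * exp (- \<omega>1 n))) sequentially"
    using eventually_window_bounds by eventually_elim (intro isolated_edge_bound_le, auto)
qed

end

theorem proposition2p5:
  fixes C :: real and p \<omega>1 \<omega>2 :: "nat \<Rightarrow> real"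
  assumes "C > 0"
    and "filterlim \<omega>1 at_top sequentially"
    and "filterlim \<omega>2 at_top sequentially"
    and "eventually (\<lambda>n. (ln n + ln (ln n) + \<omega>1 n) / (2 * n) < p n \<and>
                          p n < (ln n + ln (ln n) - \<omega>2 n) / n) sequentially"
  shows "(\<lambda>n. Gnp_prob n (p n) (\<lambda>E. real (card (leaves_not_isolated n E)) \<ge> C))
           \<longlonglongrightarrow> 1"
proof (rule tendsto_sandwich)
  let ?lower = "\<lambda>n. 1 - leaf_count_tail_bound n (p n) C - isolated_edge_bound n (p n)"
  have window: "eventually (\<lambda>n. 16 \<le> n \<and> 0 < p n \<and> p n \<le> 1/4) sequentially"
    using eventually_window_bounds[OF assms(2-4)] by eventually_elim auto
  have "eventually (\<lambda>n. C < expected_leaves n (p n)) sequentially"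
    using expected_leaves_at_top[OF assms(2-4)] by (rule filterlim_at_top_dense[THEN iffD1, rule_format])
  with window show "eventually (\<lambda>n. ?lower n
      \<le> Gnp_prob n (p n) (\<lambda>E. real (card (leaves_not_isolated n E)) \<ge> C)) sequentially"
    by eventually_elim (simp add: Gnp_leaves_not_isolated_ge)
  show "eventually (\<lambda>n. Gnp_prob n (p n) (\<lambda>E. real (card (leaves_not_isolated n E)) \<ge> C) \<le> 1)
          sequentially"
    using window by eventually_elim (simp add: Gnp_prob_eq_Pr Pr_le_1 finite_all_edges)
  have "?lower \<longlonglongrightarrow> 1 - 0 - 0"
    using leaf_count_tail_bound_tendsto_0[OF assms(2-4)] isolated_edge_bound_tendsto_0[OF assms(2-4)]
    by (intro tendsto_intros)
  then show "?lower \<longlonglongrightarrow> 1" by simp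
qed simp

end
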